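(* Let $\mu\in\mathcal P_c^*(\mathbb R^2)$. Then the functions $\theta\mapsto\operatorname{mean}(\widehat{\mathcal R}_\theta[\mu])$ from $\mathbb S_1$ to $\mathbb R$ and $\theta\mapsto\operatorname{std}(\widehat{\mathcal R}_\theta[\mu])$ from $\mathbb S_1$ to $[0,\infty)$ are continuous.
   Context: $\mathbb S_1=\{x\in\mathbb R^2:\|x\|=1\}$; $\mathcal R_\theta[\mu]=(\langle\cdot,\theta\rangle)_\#\mu$. Fix a reference Borel probability measure $\rho$ on $\mathbb R$ without atoms. For a probability measure $\nu$ on $\mathbb R$ with $F_\nu(t)=\nu((-\infty,t])$, $F_\nu^{[-1]}(t)=\inf\{s:F_\nu(s)>t\}$ and the CDT is $\hat\nu=F_\nu^{[-1]}\circ F_\rho$; $\widehat{\mathcal R}_\theta[\mu]$ is the CDT of $\mathcal R_\theta[\mu]$. For $g\in L^2_\rho(\mathbb R)$, $\operatorname{mean}(g)=\int g\,\mathrm d\rho$, $\operatorname{std}(g)=(\int|g-\operatorname{mean}(g)|^2\mathrm d\rho)^{1/2}$. $\mathcal P_c^*(\mathbb R^2)$ is the set of compactly supported Borel probability measures on $\mathbb R^2$ whose support has affine hull of dimension $>1$. *)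

theory Defs
  imports "HOL-Probability.Probability"
begin

definition cdf_of :: "real measure \<Rightarrow> real \<Rightarrow> real" where
  "cdf_of \<nu> t = measure \<nu> {..t}"

definition gen_inv_cdf :: "real measure \<Rightarrow> real \<Rightarrow> real" where
  "gen_inv_cdf \<nu> t = Inf {s. cdf_of \<nu> s > t}"

definition CDT :: "real measure \<Rightarrow> real measure \<Rightarrow> real \<Rightarrow> real" where
  "CDT \<rho> \<nu> = gen_inv_cdf \<nu> \<circ> cdf_of \<rho>"

definition radon_proj :: "(real^2) measure \<Rightarrow> real^2 \<Rightarrow> real measure" where
  "radon_proj \<mu> \<theta> = distr \<mu> borel (\<lambda>x. x \<bullet> \<theta>)"

definition mean_rho :: "real measure \<Rightarrow> (real \<Rightarrow> real) \<Rightarrow> real" where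
  "mean_rho \<rho> g = (\<integral>x. g x \<partial>\<rho>)"

definition std_rho :: "real measure \<Rightarrow> (real \<Rightarrow> real) \<Rightarrow> real" where
  "std_rho \<rho> g = sqrt (\<integral>x. (g x - mean_rho \<rho> g)\<^sup>2 \<partial>\<rho>)"

definition measure_support :: "'a::topological_space measure \<Rightarrow> 'a set" where
  "measure_support \<mu> = {x. \<forall>U. open U \<and> x \<in> U \<longrightarrow> emeasure \<mu> U > 0}"

definition Pc_star :: "(real^2) measure \<Rightarrow> bool" where
  "Pc_star \<mu> \<longleftrightarrow> prob_space \<mu> \<and> sets \<mu> = sets borel \<and>
     compact (measure_support \<mu>) \<and> aff_dim (measure_support \<mu>) > 1"

end

theory Submission
  imports Defs
begin

text \<open>
  When \<open>\<rho>\<close> has no atoms, \<open>F\<^sub>\<rho>\<close> is continuous and \<open>F\<^sub>\<rho>(X)\<close> is uniform on \<open>[0,1]\<close> for \<open>X \<sim> \<rho>\<close>;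
  the generalized inverse of \<open>F\<^sub>\<nu>\<close> transports the uniform distribution to \<open>\<nu>\<close>. Hence the CDT
  pushes \<open>\<rho>\<close> forward to \<open>\<nu>\<close>, so the mean and variance of \<open>CDT \<rho> (radon_proj \<mu> \<theta>)\<close> under \<open>\<rho>\<close>
  are \<open>m(\<theta>) = \<integral>\<langle>x,\<theta>\<rangle> d\<mu>\<close> and \<open>\<integral>(\<langle>x,\<theta>\<rangle> - m(\<theta>))\<^sup>2 d\<mu>\<close>. As \<open>\<mu>\<close> has compact support, these
  integrands are bounded uniformly in \<open>\<theta> \<in> \<bbbS>\<^sub>1\<close>, and continuity in \<open>\<theta>\<close> follows by dominated
  convergence.
\<close>

lemma cdf_of_eq_cdf: "cdf_of = cdf"
  by (simp add: fun_eq_iff cdf_of_def cdf_def)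

context real_distribution
begin

lemma bdd_below_cdf_greater: "0 < u \<Longrightarrow> bdd_below {s. u < cdf M s}"
proof -
  assume "0 < u"
  then have "eventually (\<lambda>s. cdf M s < u) at_bot"
    using order_tendstoD(2)[OF cdf_lim_at_bot] by blast
  then obtain N where "\<And>s. s \<le> N \<Longrightarrow> cdf M s < u"
    by (auto simp: eventually_at_bot_linorder)
  then have "\<And>s. u < cdf M s \<Longrightarrow> N \<le> s"
    by (metis less_asym nle_le)
  then show ?thesis
    by (metis (mono_tags) bdd_belowI mem_Collect_eq)
qed

lemma cdf_greater_nonempty: "u < 1 \<Longrightarrow> {s. u < cdf M s} \<noteq> {}"
proof -
  assume "u < 1"
  then have "eventually (\<lambda>s. u < cdf M s) at_top"
    using order_tendstoD(1)[OF cdf_lim_at_top_prob] by blast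
  then show ?thesis
    by (auto simp: eventually_at_top_linorder)
qed

lemma gen_inv_cdf_le: "0 < u \<Longrightarrow> u < cdf M t \<Longrightarrow> gen_inv_cdf M u \<le> t"
  unfolding gen_inv_cdf_def cdf_of_eq_cdf
  by (rule cInf_lower) (auto intro: bdd_below_cdf_greater)

lemma le_cdf_if_gen_inv_cdf_le:
  assumes "0 < u" "u < 1" "gen_inv_cdf M u \<le> t"
  shows "u \<le> cdf M t"
proof (rule ccontr)
  assume "\<not> u \<le> cdf M t"
  then have "eventually (\<lambda>s. cdf M s < u) (at_right t)"
    using order_tendstoD(2)[OF cdf_is_right_cont[of t, unfolded continuous_within]] by simp
  then obtain b where "t < b" and b: "\<And>s. t < s \<Longrightarrow> s < b \<Longrightarrow> cdf M s < u"
    by (auto simp: eventually_at_right_field)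
  define s0 where "s0 = (t + b) / 2"
  have "t < s0" "cdf M s0 < u"
    using \<open>t < b\<close> b by (auto simp: s0_def)
  have "s0 \<le> Inf {s. u < cdf M s}"
  proof (rule cInf_greatest)
    show "{s. u < cdf M s} \<noteq> {}"
      using cdf_greater_nonempty \<open>u < 1\<close> .
    show "s0 \<le> s" if "s \<in> {s. u < cdf M s}" for s
      using that \<open>cdf M s0 < u\<close> cdf_nondecreasing[of s s0] by force
  qed
  with assms(3) \<open>t < s0\<close> show False
    unfolding gen_inv_cdf_def cdf_of_eq_cdf by simp
qed

lemma mono_on_gen_inv_cdf: "mono_on {0<..<1} (gen_inv_cdf M)"
proof (rule mono_onI)
  fix u v :: real assume uv: "u \<in> {0<..<1}" "v \<in> {0<..<1}" "u \<le> v"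
  show "gen_inv_cdf M u \<le> gen_inv_cdf M v"
    unfolding gen_inv_cdf_def cdf_of_eq_cdf
    by (rule cInf_superset_mono) (use uv cdf_greater_nonempty bdd_below_cdf_greater in auto)
qed

text \<open>Outside \<open>(0,1)\<close> the generalized inverse takes junk values, needed only for measurability.\<close>

lemma gen_inv_cdf_neg: "u < 0 \<Longrightarrow> gen_inv_cdf M u = Inf UNIV"
  unfolding gen_inv_cdf_def cdf_of_eq_cdf
  by (metis (mono_tags) UNIV_eq_I cdf_nonneg mem_Collect_eq order_less_le_trans)

lemma gen_inv_cdf_ge_1: "1 \<le> u \<Longrightarrow> gen_inv_cdf M u = Inf {}"
  unfolding gen_inv_cdf_def cdf_of_eq_cdf
  by (metis (mono_tags) cdf_bounded_prob empty_Collect_eq leD order_trans)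

lemma borel_measurable_gen_inv_cdf: "gen_inv_cdf M \<in> borel_measurable borel"
proof -
  define junk :: "real \<Rightarrow> real"
    where "junk u = (if u < 0 then Inf UNIV else if u = 0 then gen_inv_cdf M 0 else Inf {})" for u
  have "junk \<in> borel_measurable borel"
    unfolding junk_def by measurable
  then have meas: "(\<lambda>u. if u \<in> {0<..<1} then gen_inv_cdf M u else junk u) \<in> borel_measurable borel"
    by (subst measurable_If_restrict_space_iff)
      (simp_all add: measurable_restrict_space1 borel_measurable_mono_on_fnc[OF mono_on_gen_inv_cdf]
        del: greaterThanLessThan_iff)
  have eq: "gen_inv_cdf M = (\<lambda>u. if u \<in> {0<..<1} then gen_inv_cdf M u else junk u)"
    by (auto simp: fun_eq_iff junk_def gen_inv_cdf_neg gen_inv_cdf_ge_1)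
  show ?thesis
    by (subst eq) (fact meas)
qed

end

lemma Sup_notin_open:
  fixes S :: "real set"
  assumes "open S" and "bdd_above S"
  shows "Sup S \<notin> S"
proof
  assume "Sup S \<in> S"
  with \<open>open S\<close> obtain e where "0 < e" "ball (Sup S) e \<subseteq> S"
    by (rule openE)
  moreover have "Sup S + e / 2 \<in> ball (Sup S) e"
    using \<open>0 < e\<close> by (simp add: dist_real_def)
  ultimately have "Sup S + e / 2 \<le> Sup S"
    using cSup_upper[OF _ \<open>bdd_above S\<close>] by blast
  with \<open>0 < e\<close> show False
    by simp
qed

locale atomless_real_distribution = real_distribution +
  assumes measure_singleton_eq_0 [simp]: "measure M {x} = 0"
begin

lemma continuous_cdf: "continuous_on UNIV (cdf M)"
  by (simp add: isCont_cdf continuous_at_imp_continuous_on)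

lemma measure_lessThan_eq_cdf: "measure M {..<a} = cdf M a"
proof -
  have "cdf M a = measure M ({..<a} \<union> {a})"
    by (metis cdf_def ivl_disj_un_singleton(2))
  also have "\<dots> = measure M {..<a}"
    by (rule measure_Un_null_set) (auto simp: emeasure_eq_measure null_sets_def)
  finally show ?thesis
    by simp
qed

lemma measure_cdf_le_le:
  assumes "0 \<le> c"
  shows "measure M {x. cdf M x \<le> c} \<le> c"
proof -
  let ?S = "{x. cdf M x \<le> c}"
  consider "1 \<le> c" | "?S = {}" | "c < 1" "?S \<noteq> {}"
    by (meson not_le)
  then show ?thesis
  proof cases
    case 1
    then show ?thesis
      using prob_le_1[of ?S] by linarith
  next
    case 3
    have "eventually (\<lambda>s. c < cdf M s) at_top"
      using \<open>c < 1\<close> order_tendstoD(1)[OF cdf_lim_at_top_prob] by blast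
    then obtain N where N: "\<And>s. N \<le> s \<Longrightarrow> c < cdf M s"
      by (auto simp: eventually_at_top_linorder)
    have "x \<le> N" if "x \<in> ?S" for x
      using N[of x] that by fastforce
    then have "bdd_above ?S"
      by (rule bdd_aboveI)
    moreover have "closed ?S"
      using continuous_cdf by (intro closed_Collect_le) auto
    ultimately have "Sup ?S \<in> ?S"
      using closed_contains_Sup[OF \<open>?S \<noteq> {}\<close>] by blast
    have "measure M ?S \<le> measure M {..Sup ?S}"
      using cSup_upper[OF _ \<open>bdd_above ?S\<close>] by (intro finite_measure_mono) auto
    also have "\<dots> \<le> c"
      using \<open>Sup ?S \<in> ?S\<close> by (simp add: cdf_def)
    finally show ?thesis .
  qed (use assms in simp)
qed

lemma le_measure_cdf_less:
  assumes "c \<le> 1"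
  shows "c \<le> measure M {x. cdf M x < c}"
proof -
  let ?S = "{x. cdf M x < c}"
  have "open ?S"
    using continuous_cdf by (intro open_Collect_less) auto
  have down: "x \<in> ?S" if "y \<in> ?S" "x \<le> y" for x y
    using that cdf_nondecreasing[of x y] by auto
  consider "c \<le> 0" | "\<not> bdd_above ?S" | "0 < c" "bdd_above ?S"
    by (meson not_le)
  then show ?thesis
  proof cases
    case 2
    have "x \<in> ?S" for x
    proof -
      obtain y where "y \<in> ?S" "x \<le> y"
        using 2 by (meson bdd_aboveI linorder_le_cases)
      then show ?thesis
        by (rule down)
    qed
    then have "?S = UNIV"
      by blast
    with assms show ?thesis
      using prob_space by simp
  next
    case 3
    have "eventually (\<lambda>s. cdf M s < c) at_bot"
      using \<open>0 < c\<close> order_tendstoD(2)[OF cdf_lim_at_bot] by blast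
    then have "?S \<noteq> {}"
      by (auto simp: eventually_at_bot_linorder)
    define a where "a = Sup ?S"
    have "{..<a} \<subseteq> ?S"
    proof
      fix x assume "x \<in> {..<a}"
      then obtain y where "y \<in> ?S" "x < y"
        using less_cSup_iff[OF \<open>?S \<noteq> {}\<close> \<open>bdd_above ?S\<close>] by (auto simp: a_def)
      then show "x \<in> ?S"
        using down by simp
    qed
    have "c \<le> cdf M a"
      using Sup_notin_open[OF \<open>open ?S\<close> \<open>bdd_above ?S\<close>] by (simp add: a_def)
    also have "\<dots> = measure M {..<a}"
      by (rule measure_lessThan_eq_cdf[symmetric])
    also have "\<dots> \<le> measure M ?S"
      using \<open>{..<a} \<subseteq> ?S\<close> \<open>open ?S\<close> by (intro finite_measure_mono) auto
    finally show ?thesis .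
  qed (use measure_nonneg[of M ?S] in linarith)
qed

lemma AE_cdf_between_0_1: "AE x in M. 0 < cdf M x \<and> cdf M x < 1"
proof -
  have "closed {x. cdf M x \<le> 0}"
    using continuous_cdf by (auto intro!: closed_Collect_le)
  then have closed0: "{x. cdf M x \<le> 0} \<in> sets M"
    by (simp add: events_eq_borel borel_closed)
  have "prob {x. cdf M x \<le> 0} = 0"
    using measure_cdf_le_le[of 0] measure_nonneg[of M "{x. cdf M x \<le> 0}"] by linarith
  moreover have "{x. 0 < cdf M x} = space M - {x. cdf M x \<le> 0}"
    by auto
  ultimately have pos: "prob {x. 0 < cdf M x} = 1"
    using prob_compl[OF closed0] by simp
  have below_1: "prob {x. cdf M x < 1} = 1"
    using le_measure_cdf_less[of 1] prob_le_1[of "{x. cdf M x < 1}"] by simp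
  show ?thesis
    using AE_prob_1[OF pos] AE_prob_1[OF below_1] by eventually_elim simp
qed

lemma borel_measurable_CDT:
  assumes "real_distribution \<nu>"
  shows "CDT M \<nu> \<in> borel_measurable M"
proof -
  have "cdf M \<in> borel_measurable borel"
    by (rule borel_measurable_mono) (simp add: mono_def cdf_nondecreasing)
  then have "CDT M \<nu> \<in> borel_measurable borel"
    unfolding CDT_def cdf_of_eq_cdf
    using real_distribution.borel_measurable_gen_inv_cdf[OF assms] by measurable
  then show ?thesis
    by (simp add: measurable_cong_sets[OF events_eq_borel])
qed

lemma measure_CDT_le:
  assumes \<nu>: "real_distribution \<nu>"
  shows "measure M {x. CDT M \<nu> x \<le> t} = cdf \<nu> t"
proof -
  interpret \<nu>: real_distribution \<nu> by fact
  let ?D = "{x. CDT M \<nu> x \<le> t}" and ?c = "cdf \<nu> t"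
  let ?A = "{x. 0 < cdf M x \<and> cdf M x < 1}"
  have "{x \<in> space M. CDT M \<nu> x \<le> t} \<in> sets M"
    using borel_measurable_CDT[OF \<nu>] by measurable
  then have sets_D: "?D \<in> sets M"
    by simp
  have "open ?A" "open {x. cdf M x < ?c}" "closed {x. cdf M x \<le> ?c}"
    using continuous_cdf by (auto intro!: open_Collect_conj open_Collect_less closed_Collect_le)
  then have sets_cdf: "?A \<in> sets M" "{x. cdf M x < ?c} \<in> sets M" "{x. cdf M x \<le> ?c} \<in> sets M"
    by (simp_all add: borel_open borel_closed)
  txt \<open>Where \<open>0 < F\<^sub>M < 1\<close>, which is almost everywhere, \<open>{CDT \<le> t}\<close> is sandwiched between
    \<open>{F\<^sub>M < F\<^sub>\<nu> t}\<close> and \<open>{F\<^sub>M \<le> F\<^sub>\<nu> t}\<close>, and both have measure \<open>F\<^sub>\<nu> t\<close>.\<close>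
  have lower: "{x. cdf M x < ?c} \<inter> ?A \<subseteq> ?D \<inter> ?A"
    by (auto simp: CDT_def cdf_of_eq_cdf intro!: \<nu>.gen_inv_cdf_le)
  have upper: "?D \<inter> ?A \<subseteq> {x. cdf M x \<le> ?c}"
    by (auto simp: CDT_def cdf_of_eq_cdf intro!: \<nu>.le_cdf_if_gen_inv_cdf_le)
  have restrict: "measure M B = measure M (B \<inter> ?A)" if "B \<in> sets M" for B
  proof (rule measure_eq_AE)
    show "AE x in M. x \<in> B \<longleftrightarrow> x \<in> B \<inter> ?A"
      using AE_cdf_between_0_1 by eventually_elim simp
  qed (use that sets_cdf in simp_all)
  have "measure M ?D = measure M (?D \<inter> ?A)"
    by (rule restrict[OF sets_D])
  also have "\<dots> \<le> measure M {x. cdf M x \<le> ?c}"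
    using upper sets_cdf(3) by (rule finite_measure_mono)
  also have "\<dots> \<le> ?c"
    by (rule measure_cdf_le_le[OF \<nu>.cdf_nonneg])
  finally have "measure M ?D \<le> ?c" .
  have "?c \<le> measure M {x. cdf M x < ?c}"
    by (rule le_measure_cdf_less[OF \<nu>.cdf_bounded_prob])
  also have "\<dots> = measure M ({x. cdf M x < ?c} \<inter> ?A)"
    by (rule restrict[OF sets_cdf(2)])
  also have "\<dots> \<le> measure M (?D \<inter> ?A)"
    using lower by (rule finite_measure_mono) (use sets_D sets_cdf in auto)
  also have "\<dots> = measure M ?D"
    by (rule restrict[OF sets_D, symmetric])
  finally show ?thesis
    using \<open>measure M ?D \<le> ?c\<close> by linarith
qed

lemma distr_CDT:
  assumes \<nu>: "real_distribution \<nu>"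
  shows "distr M borel (CDT M \<nu>) = \<nu>"
proof -
  note meas = borel_measurable_CDT[OF \<nu>]
  have "cdf (distr M borel (CDT M \<nu>)) t = cdf \<nu> t" for t
    unfolding cdf_def measure_distr[OF meas atMost_borel]
    using measure_CDT_le[OF \<nu>, of t] by (simp add: vimage_def cdf_def)
  then show ?thesis
    by (intro cdf_unique \<nu> real_distribution_distr meas) auto
qed

lemma integral_CDT:
  fixes g :: "real \<Rightarrow> 'b::{banach, second_countable_topology}"
  assumes "real_distribution \<nu>" and "g \<in> borel_measurable borel"
  shows "(\<integral>x. g (CDT M \<nu> x) \<partial>M) = (\<integral>y. g y \<partial>\<nu>)"
  using integral_distr[OF borel_measurable_CDT[OF assms(1)] assms(2)] distr_CDT[OF assms(1)]
  by simp

lemma mean_rho_CDT: "real_distribution \<nu> \<Longrightarrow> mean_rho M (CDT M \<nu>) = (\<integral>y. y \<partial>\<nu>)"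
  unfolding mean_rho_def by (rule integral_CDT) auto

lemma std_rho_CDT:
  assumes "real_distribution \<nu>"
  shows "std_rho M (CDT M \<nu>) = sqrt (\<integral>y. (y - (\<integral>z. z \<partial>\<nu>))\<^sup>2 \<partial>\<nu>)"
  unfolding std_rho_def mean_rho_CDT[OF assms] by (subst integral_CDT[OF assms]) auto

end

lemma real_distribution_radon_proj:
  "prob_space \<mu> \<Longrightarrow> sets \<mu> = sets borel \<Longrightarrow> real_distribution (radon_proj \<mu> \<theta>)"
  unfolding radon_proj_def by (intro prob_space.real_distribution_distr) auto

lemma integral_radon_proj:
  fixes g :: "real \<Rightarrow> 'b::{banach, second_countable_topology}"
  assumes "sets \<mu> = sets borel" "g \<in> borel_measurable borel"
  shows "integral\<^sup>L (radon_proj \<mu> \<theta>) g = (\<integral>x. g (x \<bullet> \<theta>) \<partial>\<mu>)"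
  unfolding radon_proj_def by (rule integral_distr) (use assms in auto)

lemma AE_in_measure_support:
  fixes \<mu> :: "'a::second_countable_topology measure"
  assumes "sets \<mu> = sets borel"
  shows "AE x in \<mu>. x \<in> measure_support \<mu>"
proof -
  define F where "F = {U. open U \<and> emeasure \<mu> U = 0}"
  have "\<And>U. U \<in> F \<Longrightarrow> open U"
    by (simp add: F_def)
  then obtain F' where F': "F' \<subseteq> F" "countable F'" "\<Union>F' = \<Union>F"
    using Lindelof by blast
  have "U \<in> null_sets \<mu>" if "U \<in> F'" for U
    using that F'(1) assms by (auto simp: F_def null_sets_def)
  then have "(\<Union>U\<in>F'. U) \<in> null_sets \<mu>"
    using F'(2) by (intro null_sets_UN')
  moreover have "{x \<in> space \<mu>. x \<notin> measure_support \<mu>} \<subseteq> (\<Union>U\<in>F'. U)"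
    using F'(3) by (auto simp: measure_support_def F_def)
  ultimately show ?thesis
    by (rule AE_I')
qed

lemma continuous_on_integral_bounded:
  fixes f :: "'a \<Rightarrow> 'b::metric_space \<Rightarrow> 'c::{banach, second_countable_topology}"
  assumes "finite_measure M"
    and meas: "\<And>t. t \<in> S \<Longrightarrow> (\<lambda>x. f x t) \<in> borel_measurable M"
    and cont: "\<And>x. continuous_on S (f x)"
    and bound: "AE x in M. \<forall>t\<in>S. norm (f x t) \<le> K"
  shows "continuous_on S (\<lambda>t. \<integral>x. f x t \<partial>M)"
proof (rule continuous_on_sequentiallyI)
  fix u t assume u: "\<forall>n. u n \<in> S" and "t \<in> S" and "u \<longlonglongrightarrow> t"
  show "(\<lambda>n. \<integral>x. f x (u n) \<partial>M) \<longlonglongrightarrow> \<integral>x. f x t \<partial>M"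
  proof (rule integral_dominated_convergence[where w="\<lambda>_. K"])
    show "AE x in M. (\<lambda>n. f x (u n)) \<longlonglongrightarrow> f x t"
      using continuous_on_tendsto_compose[OF cont \<open>u \<longlonglongrightarrow> t\<close> \<open>t \<in> S\<close>] u by simp
    show "AE x in M. norm (f x (u n)) \<le> K" for n
      using bound by eventually_elim (use u in auto)
    show "(\<lambda>x. f x t) \<in> borel_measurable M"
      using meas \<open>t \<in> S\<close> .
    show "(\<lambda>x. f x (u n)) \<in> borel_measurable M" for n
      using meas u by blast
    show "integrable M (\<lambda>_. K)"
      using \<open>finite_measure M\<close> by (rule finite_measure.integrable_const)
  qed
qed

lemma continuous_on_integral_comp_inner:
  fixes \<mu> :: "'a::euclidean_space measure" and f :: "real \<Rightarrow> 'b::{banach, second_countable_topology}"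
  assumes \<mu>: "finite_measure \<mu>" "sets \<mu> = sets borel" and B: "AE x in \<mu>. norm x \<le> B"
    and S: "compact S" and c: "continuous_on S c" and f: "continuous_on UNIV f"
  shows "continuous_on S (\<lambda>\<theta>. \<integral>x. f (x \<bullet> \<theta> - c \<theta>) \<partial>\<mu>)"
proof -
  obtain R where R: "\<And>\<theta>. \<theta> \<in> S \<Longrightarrow> norm \<theta> \<le> R"
    using compact_imp_bounded[OF S] by (auto simp: bounded_iff)
  obtain C where C: "\<And>\<theta>. \<theta> \<in> S \<Longrightarrow> \<bar>c \<theta>\<bar> \<le> C"
    using compact_imp_bounded[OF compact_continuous_image[OF c S]] by (auto simp: bounded_iff)
  have "bounded (f ` cball 0 (B * R + C))"
    by (intro compact_imp_bounded compact_continuous_image continuous_on_subset[OF f]) auto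
  then obtain K where K: "\<And>y. y \<in> cball 0 (B * R + C) \<Longrightarrow> norm (f y) \<le> K"
    by (metis bounded_iff imageI)
  have bound: "\<bar>x \<bullet> \<theta> - c \<theta>\<bar> \<le> B * R + C" if "norm x \<le> B" "\<theta> \<in> S" for x \<theta>
  proof -
    have "\<bar>x \<bullet> \<theta>\<bar> \<le> norm x * norm \<theta>"
      by (rule Cauchy_Schwarz_ineq2)
    also have "\<dots> \<le> B * R"
      using that R[OF that(2)] order_trans[OF norm_ge_zero that(1)] by (intro mult_mono) auto
    finally show ?thesis
      using C[OF that(2)] by linarith
  qed
  have meas: "(\<lambda>x. f (x \<bullet> \<theta> - c \<theta>)) \<in> borel_measurable \<mu>" for \<theta>
  proof -
    have "continuous_on UNIV (\<lambda>x. f (x \<bullet> \<theta> - c \<theta>))"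
      by (intro continuous_on_compose2[OF f] continuous_intros) auto
    then show ?thesis
      using borel_measurable_continuous_onI measurable_cong_sets[OF \<mu>(2) refl] by blast
  qed
  have cont: "continuous_on S (\<lambda>\<theta>. f (x \<bullet> \<theta> - c \<theta>))" for x
    by (intro continuous_on_compose2[OF f] continuous_intros c) auto
  have "AE x in \<mu>. \<forall>\<theta>\<in>S. norm (f (x \<bullet> \<theta> - c \<theta>)) \<le> K"
    using B by eventually_elim (auto intro!: K bound)
  then show ?thesis
    by (rule continuous_on_integral_bounded[where f="\<lambda>x \<theta>. f (x \<bullet> \<theta> - c \<theta>)", OF \<mu>(1) meas cont])
qed

theorem lemma5:
  fixes \<rho> :: "real measure" and \<mu> :: "(real^2) measure"
  assumes "prob_space \<rho>" and "sets \<rho> = sets borel"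
    and "\<And>x. measure \<rho> {x} = 0"
    and "Pc_star \<mu>"
  shows "continuous_on (sphere 0 1) (\<lambda>\<theta>. mean_rho \<rho> (CDT \<rho> (radon_proj \<mu> \<theta>))) \<and>
    continuous_on (sphere 0 1) (\<lambda>\<theta>. std_rho \<rho> (CDT \<rho> (radon_proj \<mu> \<theta>)))"
proof -
  have "real_distribution \<rho>"
    using assms(1,2) by (simp add: real_distribution_def real_distribution_axioms_def)
  then interpret \<rho>: atomless_real_distribution \<rho>
    using assms(3) by (simp add: atomless_real_distribution_def atomless_real_distribution_axioms_def)
  have \<mu>: "prob_space \<mu>" "sets \<mu> = sets borel" and "compact (measure_support \<mu>)"
    using assms(4) by (auto simp: Pc_star_def)
  obtain B where "\<And>x. x \<in> measure_support \<mu> \<Longrightarrow> norm x \<le> B"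
    using compact_imp_bounded[OF \<open>compact (measure_support \<mu>)\<close>] by (auto simp: bounded_iff)
  with AE_in_measure_support[OF \<mu>(2)] have B: "AE x in \<mu>. norm x \<le> B"
    by (auto elim: AE_mp)
  define m where "m \<theta> = (\<integral>x. x \<bullet> \<theta> \<partial>\<mu>)" for \<theta> :: "real^2"
  have mean: "mean_rho \<rho> (CDT \<rho> (radon_proj \<mu> \<theta>)) = m \<theta>" for \<theta>
    using \<rho>.mean_rho_CDT[OF real_distribution_radon_proj[OF \<mu>]]
      integral_radon_proj[OF \<mu>(2), of "\<lambda>y. y"] by (simp add: m_def)
  have std: "std_rho \<rho> (CDT \<rho> (radon_proj \<mu> \<theta>)) = sqrt (\<integral>x. (x \<bullet> \<theta> - m \<theta>)\<^sup>2 \<partial>\<mu>)" for \<theta>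
    using \<rho>.std_rho_CDT[OF real_distribution_radon_proj[OF \<mu>]]
      integral_radon_proj[OF \<mu>(2), of "\<lambda>y. y"] integral_radon_proj[OF \<mu>(2), of "\<lambda>y. (y - m \<theta>)\<^sup>2"]
    by (simp add: m_def)
  note moments = continuous_on_integral_comp_inner[OF prob_space.finite_measure[OF \<mu>(1)] \<mu>(2) B
      compact_sphere[of 0 1]]
  have "continuous_on (sphere 0 1) m"
    using moments[where c="\<lambda>_. 0" and f="\<lambda>y. y"] by (simp add: m_def)
  moreover have "continuous_on (sphere 0 1) (\<lambda>\<theta>. \<integral>x. (x \<bullet> \<theta> - m \<theta>)\<^sup>2 \<partial>\<mu>)"
    using moments[OF \<open>continuous_on (sphere 0 1) m\<close>, where f="\<lambda>y. y\<^sup>2"]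
    by (simp add: continuous_on_power)
  ultimately show ?thesis
    unfolding mean std by (simp add: continuous_on_real_sqrt)
qed

end
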